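(* Let $\mathbf{H}$ be a finite commutative semihypergroup with states $e_1,\dots,e_n$ that is derived from a group. Then for every $i$ and every $k$, the $k$-th row $(a_{i,1}(k),\dots,a_{i,n}(k))$ of $A_i$ is a rearrangement of the column $a_{1,1}$ (equivalently, of any column $a_{j,l}$); that is, every row of every $A_i$ has the same multiset of entries as the columns.
   Context: A finite commutative semihypergroup $\mathbf{H}$ with $n$ states $e_1,\dots,e_n$ is given by a convolution $e_i*e_j=\sum_{k=1}^n a_{i,j}(k)e_k$ ($i,j=1,\dots,n$), extended bilinearly, where $a_{i,j}(k)\ge 0$, $\sum_{k=1}^n a_{i,j}(k)=1$ for all $i,j$, the convolution is associative and commutative ($a_{i,j}(k)=a_{j,i}(k)$). Let $a_{i,j}\in\mathbb{R}^n$ denote the column vector $(a_{i,j}(1),\dots,a_{i,j}(n))^T$; let $A_i$ be the $n\times n$ matrix with columns $a_{i,1},\dots,a_{i,n}$ (so its $(k,j)$ entry is $a_{i,j}(k)$) and $B_i$ the matrix with columns $a_{1,i},\dots,a_{n,i}$. $\mathbf{H}$ is called derived from a group if it satisfies condition (A): the set $\{a_{i,j}: 1\le i,j\le n\}$ contains exactly $n$ distinct vectors, and for each $i$ the columns of $A_i$ are linearly independent and the columns of $B_i$ are linearly independent. *)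

theory Defs
  imports "HOL-Analysis.Analysis" "HOL-Library.Multiset"
begin

text \<open>States e_1..e_n are indexed by a finite type 'n (n = CARD('n)).
  The structure constants are given by a :: 'n => 'n => real^'n,
  a i j $ k being the coefficient a_{i,j}(k) of e_k in e_i * e_j.\<close>

definition fin_comm_semihypergroup :: "('n::finite \<Rightarrow> 'n \<Rightarrow> real^'n) \<Rightarrow> bool" where
  "fin_comm_semihypergroup a \<longleftrightarrow>
     (\<forall>i j k. a i j $ k \<ge> 0) \<and>
     (\<forall>i j. (\<Sum>k\<in>UNIV. a i j $ k) = 1) \<and>
     (\<forall>i j. a i j = a j i) \<and>
     (\<forall>i j l m. (\<Sum>k\<in>UNIV. a i j $ k * a k l $ m) = (\<Sum>k\<in>UNIV. a j l $ k * a i k $ m))"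

text \<open>Columns of A_i are a_{i,1},...,a_{i,n}; columns of B_i are a_{1,i},...,a_{n,i}.
  A family of columns is linearly independent iff it is injective and its range is independent.\<close>

definition derived_from_group :: "('n::finite \<Rightarrow> 'n \<Rightarrow> real^'n) \<Rightarrow> bool" where
  "derived_from_group a \<longleftrightarrow>
     card {a i j | i j. True} = CARD('n) \<and>
     (\<forall>i. inj (\<lambda>j. a i j) \<and> independent (range (\<lambda>j. a i j))) \<and>
     (\<forall>i. inj (\<lambda>j. a j i) \<and> independent (range (\<lambda>j. a j i)))"

end

theory Submission
  imports Defs
begin

text \<open>Condition (A) makes the n distinct vectors a_{i,j} a basis S of \<real>^n, and every row
  j \<mapsto> a_{i,j} of structure constants enumerates S bijectively. Expanding
  e_I * e_J * e_L in this basis in two ways via associativity shows that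
  a_{I,J}(k) = a_{J,L}(m) whenever a_{L,k} = a_{I,m}. Matching indices along these
  bijections turns every column and every row of every A_i into a rearrangement of one
  fixed column.\<close>

lemma image_mset_mset_set_UNIV_reindex:
  fixes h :: "'n::finite \<Rightarrow> 'b"
  assumes "inj g"
  shows "image_mset (\<lambda>m. h (g m)) (mset_set (UNIV::'n set)) = image_mset h (mset_set UNIV)"
proof -
  have "range g = UNIV" using assms by (simp add: finite_UNIV_inj_surj)
  then have "image_mset g (mset_set UNIV) = mset_set (UNIV::'n set)"
    using assms by (simp add: image_mset_mset_set)
  moreover have "image_mset (\<lambda>m. h (g m)) M = image_mset h (image_mset g M)" for M
    by (simp add: multiset.map_comp comp_def)
  ultimately show ?thesis by simp
qed

lemma sum_scaleR_range_reindex: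
  fixes h :: "'k::finite \<Rightarrow> 'v::real_vector"
  assumes "inj h"
  shows "(\<Sum>k\<in>UNIV. f k *\<^sub>R h k) = (\<Sum>w\<in>range h. f (inv h w) *\<^sub>R w)"
  using assms by (simp add: sum.reindex)

lemma independent_coefficients_eq:
  fixes h h' :: "'k::finite \<Rightarrow> 'v::real_vector"
  assumes "inj h" "inj h'" "range h' = range h" "independent (range h)"
    and "(\<Sum>k\<in>UNIV. f k *\<^sub>R h k) = (\<Sum>k\<in>UNIV. g k *\<^sub>R h' k)"
    and "h k = h' m"
  shows "f k = g m"
proof -
  define c where "c w = f (inv h w) - g (inv h' w)" for w
  have "(\<Sum>w\<in>range h. c w *\<^sub>R w)
      = (\<Sum>w\<in>range h. f (inv h w) *\<^sub>R w) - (\<Sum>w\<in>range h'. g (inv h' w) *\<^sub>R w)"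
    unfolding c_def assms(3) by (simp add: scaleR_left_diff_distrib sum_subtractf)
  also have "\<dots> = 0"
    using assms(5) unfolding sum_scaleR_range_reindex[OF assms(1)] sum_scaleR_range_reindex[OF assms(2)]
    by simp
  finally have "c (h k) = 0"
    using real_vector.independentD[OF assms(4) _ subset_refl _ rangeI] by simp
  then show ?thesis
    using assms(1,2,6) by (metis c_def inv_f_f eq_iff_diff_eq_0)
qed

lemma derived_from_group_row_range:
  assumes "derived_from_group a"
  shows "range (a i) = {a i j | i j. True}"
proof (rule card_subset_eq)
  have "{a i j | i j. True} = (\<lambda>(i, j). a i j) ` UNIV" by auto
  then show "finite {a i j | i j. True}" by simp
  show "range (a i) \<subseteq> {a i j | i j. True}" by auto
  show "card (range (a i)) = card {a i j | i j. True}"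
    using assms by (simp add: derived_from_group_def card_image eta_contract_eq)
qed

lemma derived_from_group_row_inj:
  assumes "derived_from_group a"
  shows "inj (a i)"
  using assms by (simp add: derived_from_group_def eta_contract_eq)

lemma fin_comm_semihypergroup_assoc_expansion:
  assumes "fin_comm_semihypergroup a"
  shows "(\<Sum>k\<in>UNIV. a I J $ k *\<^sub>R a L k) = (\<Sum>k\<in>UNIV. a J L $ k *\<^sub>R a I k)"
proof -
  have comm: "a k L = a L k" for k
    using assms by (simp add: fin_comm_semihypergroup_def)
  have "(\<Sum>k\<in>UNIV. a I J $ k * a k L $ m) = (\<Sum>k\<in>UNIV. a J L $ k * a I k $ m)" for m
    using assms unfolding fin_comm_semihypergroup_def by blast
  then show ?thesis by (simp add: vec_eq_iff comm mult.commute)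
qed

lemma structure_constants_match:
  assumes "fin_comm_semihypergroup a" "derived_from_group a"
    and "a L k = a I m"
  shows "a I J $ k = a J L $ m"
proof (rule independent_coefficients_eq[where f = "\<lambda>k. a I J $ k" and g = "\<lambda>m. a J L $ m"])
  show "inj (a L)" "inj (a I)"
    using derived_from_group_row_inj[OF assms(2)] by blast+
  show "independent (range (a L))"
    using assms(2) by (simp add: derived_from_group_def eta_contract_eq)
  show "range (a I) = range (a L)"
    using derived_from_group_row_range[OF assms(2)] by blast
qed (use fin_comm_semihypergroup_assoc_expansion[OF assms(1)] assms(3) in auto)

context
  fixes a :: "'n::finite \<Rightarrow> 'n \<Rightarrow> real^'n"
  assumes hyp: "fin_comm_semihypergroup a"
    and group: "derived_from_group a"
begin

lemma column_mset_shift: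
  "image_mset (\<lambda>m. a J L $ m) (mset_set UNIV) = image_mset (\<lambda>m. a I J $ m) (mset_set UNIV)"
proof -
  define g where "g k = inv (a I) (a L k)" for k
  have "a L k \<in> range (a I)" for k
    using derived_from_group_row_range[OF group] by blast
  then have g: "a I (g k) = a L k" for k
    unfolding g_def by (rule f_inv_into_f)
  have "inj g"
  proof (rule injI)
    fix x y
    assume "g x = g y"
    then have "a L x = a L y" by (simp flip: g)
    then show "x = y" using derived_from_group_row_inj[OF group] by (simp add: inj_eq)
  qed
  moreover have "a J L $ g k = a I J $ k" for k
    using structure_constants_match[OF hyp group g[symmetric]] by simp
  ultimately show ?thesis
    using image_mset_mset_set_UNIV_reindex[of g "\<lambda>m. a J L $ m"] by simp
qed

lemma columns_mset_eq:
  "image_mset (\<lambda>m. a p q $ m) (mset_set UNIV) = image_mset (\<lambda>m. a r s $ m) (mset_set UNIV)"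
proof -
  have "a p r = a r p"
    using hyp by (simp add: fin_comm_semihypergroup_def)
  then show ?thesis
    using column_mset_shift[of p q r] column_mset_shift[of r s p] by simp
qed

lemma row_mset_eq_column:
  "image_mset (\<lambda>j. a i j $ k) (mset_set UNIV) = image_mset (\<lambda>m. a I i $ m) (mset_set UNIV)"
proof -
  have comm: "a x y = a y x" for x y
    using hyp by (simp add: fin_comm_semihypergroup_def)
  define f where "f j = inv (a j) (a I k)" for j
  have "a I k \<in> range (a j)" for j
    using derived_from_group_row_range[OF group] by blast
  then have f: "a j (f j) = a I k" for j
    unfolding f_def by (rule f_inv_into_f)
  have "inj f"
  proof (rule injI)
    fix x y
    assume "f x = f y"
    then have "a (f x) x = a (f x) y" using f[of x] f[of y] by (simp add: comm)
    then show "x = y" using derived_from_group_row_inj[OF group] by (simp add: inj_eq)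
  qed
  moreover have "a I i $ f j = a i j $ k" for j
    using structure_constants_match[OF hyp group f] by simp
  ultimately show ?thesis
    using image_mset_mset_set_UNIV_reindex[of f "\<lambda>m. a I i $ m"] by simp
qed

end

theorem corollary3:
  fixes a :: "'n::finite \<Rightarrow> 'n \<Rightarrow> real^'n"
  assumes "fin_comm_semihypergroup a"
    and "derived_from_group a"
  shows "\<forall>i k j l. image_mset (\<lambda>j'. a i j' $ k) (mset_set UNIV)
                   = image_mset (\<lambda>m. a j l $ m) (mset_set UNIV)"
proof (intro allI)
  fix i k j l
  show "image_mset (\<lambda>j'. a i j' $ k) (mset_set UNIV) = image_mset (\<lambda>m. a j l $ m) (mset_set UNIV)"
    using row_mset_eq_column[OF assms, of i k j] columns_mset_eq[OF assms, of j i j l] by simp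
qed

end
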